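(* Let $a>0$, $\gamma\in(\tfrac12,1]$, and let $f$ be an $a$-periodic function with $f\in L_1(0,a)$ whose Fourier coefficients $f_n=\frac1a\int_0^af(x)e^{-2\pi inx/a}dx$ satisfy $\{f_n\}_{n\in\mathbb Z}\in l^1(\mathbb Z)$. Let $\xi\in\overline{\mathbb C_+}$ with $\frac{a\xi}{2\pi}\notin\mathbb Z$. Then for every $x\ge0$ the improper integral $\int_x^\infty\frac{e^{i\xi t}f(t)}{(t+1)^\gamma}dt$ exists and $$\Big|e^{-i\xi x}\int_x^\infty\frac{e^{i\xi t}f(t)}{(t+1)^\gamma}dt\Big|\le2\Big(\sum_{n=-\infty}^{+\infty}\frac{|f_n|}{|\xi+\frac{2\pi n}a|}\Big)\frac1{(x+1)^\gamma}.$$ *)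

theory Defs
  imports "HOL-Analysis.Analysis"
begin

definition fourier_coeff :: "real \<Rightarrow> (real \<Rightarrow> complex) \<Rightarrow> int \<Rightarrow> complex" where
  "fourier_coeff a f n =
     (1 / complex_of_real a) *
     integral {0..a} (\<lambda>t. f t * exp (- (2 * complex_of_real pi * \<i> * of_int n * complex_of_real t)
                                        / complex_of_real a))"

definition has_improper_integral_from :: "(real \<Rightarrow> complex) \<Rightarrow> real \<Rightarrow> complex \<Rightarrow> bool" where
  "has_improper_integral_from g x I \<longleftrightarrow>
     (\<forall>T\<ge>x. g integrable_on {x..T}) \<and> ((\<lambda>T. integral {x..T} g) \<longlongrightarrow> I) at_top"

end

theory Submission
  imports Defs "HOL-Library.Nat_Bijection"
begin

text \<open>
  The Fourier series \<open>g\<close> of \<open>f\<close> converges absolutely, and \<open>f = g\<close> almost everywhere: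
  \<open>f - g\<close> is integrable with vanishing Fourier coefficients, hence orthogonal to all
  trigonometric polynomials, hence (Stone--Weierstrass) to all continuous periodic functions,
  hence to the indicators of intervals, and Lebesgue's differentiation theorem makes it vanish
  almost everywhere.

  Integrating termwise, \<open>G t = \<Sum>n. f_n exp (i k_n t) / (i k_n)\<close> with \<open>k_n = \<xi> + 2\<pi>n/a\<close>
  is a primitive of \<open>exp (i \<xi> t) g t\<close>, and \<open>|G t| \<le> exp (- t Im \<xi>) S\<close> with
  \<open>S = \<Sum>n. |f_n| / |k_n|\<close>, which is finite because the non-resonance condition keeps the
  \<open>k_n\<close> away from \<open>0\<close>. Integration by parts against the decreasing weight
  \<open>w t = (t + 1) powr - \<gamma>\<close> writes the integral over \<open>[x, T]\<close> as
  \<open>G T w T - G x w x - \<integral>\<^sub>x\<^sup>T G w'\<close>. As \<open>M = exp (- x Im \<xi>) S\<close> bounds \<open>|G|\<close> on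
  \<open>[x, \<infinity>)\<close>, the last integral converges as \<open>T \<rightarrow> \<infinity>\<close> and the three terms are bounded
  by \<open>M w T + M w x + M (w x - w T) = 2 M w x\<close>.
\<close>

section \<open>Integrals of products and of series\<close>

lemma absolutely_integrable_continuous_mult:
  fixes h \<phi> :: "real \<Rightarrow> complex"
  assumes "h absolutely_integrable_on {s..t}" "continuous_on {s..t} \<phi>"
  shows "(\<lambda>x. \<phi> x * h x) absolutely_integrable_on {s..t}"
proof (rule absolutely_integrable_bounded_measurable_product[where h="(*)"])
  show "bilinear ((*) :: complex \<Rightarrow> _)" by (simp add: bilinear_times)
  show "\<phi> \<in> borel_measurable (lebesgue_on {s..t})"
    using assms(2) by (simp add: continuous_imp_measurable_on_sets_lebesgue)
  show "bounded (\<phi> ` {s..t})"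
    using assms(2) compact_Icc compact_continuous_image compact_imp_bounded by blast
qed (use assms in auto)

lemma integrable_continuous_mult:
  fixes h \<phi> :: "real \<Rightarrow> complex"
  assumes "h absolutely_integrable_on {s..t}" "continuous_on {s..t} \<phi>"
  shows "(\<lambda>x. \<phi> x * h x) integrable_on {s..t}"
  using absolutely_integrable_continuous_mult[OF assms] by (rule set_lebesgue_integral_eq_integral)

lemma sums_integral_suminf:
  fixes F :: "nat \<Rightarrow> real \<Rightarrow> complex"
  assumes B: "summable B"
    and bound: "\<And>m u. u \<in> {s..t} \<Longrightarrow> norm (F m u) \<le> B m"
    and cont: "\<And>m. continuous_on {s..t} (F m)"
  shows "(\<lambda>m. integral {s..t} (F m)) sums integral {s..t} (\<lambda>u. \<Sum>m. F m u)"
    and "(\<lambda>u. \<Sum>m. F m u) integrable_on {s..t}"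
proof -
  have "uniform_limit {s..t} (\<lambda>k u. \<Sum>m<k. F m u) (\<lambda>u. \<Sum>m. F m u) sequentially"
    by (rule Weierstrass_m_test[OF bound B]) simp
  then obtain I J where I: "\<And>k. ((\<lambda>u. \<Sum>m<k. F m u) has_integral I k) {s..t}"
    and J: "((\<lambda>u. \<Sum>m. F m u) has_integral J) {s..t}" and IJ: "I \<longlonglongrightarrow> J"
    by (rule uniform_limit_integral) (auto intro: continuous_on_sum cont)
  have "I = (\<lambda>k. \<Sum>m<k. integral {s..t} (F m))"
    using integral_unique[OF I] integral_sum[of "{..<_}" F "{s..t}"]
    by (simp add: integrable_continuous_interval cont)
  with IJ show "(\<lambda>m. integral {s..t} (F m)) sums integral {s..t} (\<lambda>u. \<Sum>m. F m u)"
    unfolding sums_def integral_unique[OF J] by simp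
  from J show "(\<lambda>u. \<Sum>m. F m u) integrable_on {s..t}" by blast
qed

lemma norm_exp_i_mult: "norm (exp (\<i> * k * of_real t)) = exp (- Im k * t)"
  by (simp add: norm_exp_eq_Re)

lemma norm_exp_i_mult_le:
  assumes "u \<in> {s..t}"
  shows "norm (exp (\<i> * k * of_real u)) \<le> exp (\<bar>Im k\<bar> * (\<bar>s\<bar> + \<bar>t\<bar>))"
proof -
  have "- Im k * u \<le> \<bar>Im k\<bar> * \<bar>u\<bar>"
    by (metis abs_ge_minus_self abs_mult mult_minus_left)
  also have "\<dots> \<le> \<bar>Im k\<bar> * (\<bar>s\<bar> + \<bar>t\<bar>)"
    using assms by (intro mult_left_mono) auto
  finally show ?thesis
    by (simp add: norm_exp_i_mult)
qed

lemma has_integral_exp_i_mult: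
  fixes k :: complex
  assumes "k \<noteq> 0" "s \<le> t"
  shows "((\<lambda>u. exp (\<i> * k * of_real u)) has_integral
           (exp (\<i> * k * of_real t) - exp (\<i> * k * of_real s)) / (\<i> * k)) {s..t}"
proof -
  have "((\<lambda>u. exp (\<i> * k * of_real u) / (\<i> * k)) has_vector_derivative exp (\<i> * k * of_real u))
      (at u within {s..t})" for u
  proof -
    have "((\<lambda>z. exp (\<i> * k * z) / (\<i> * k)) has_field_derivative exp (\<i> * k * of_real u))
        (at (of_real u))"
      using assms(1) by (auto intro!: derivative_eq_intros)
    from has_vector_derivative_real_field[OF this] show ?thesis by simp
  qed
  from fundamental_theorem_of_calculus[OF assms(2) this]
  show ?thesis by (simp add: diff_divide_distrib)
qed

section \<open>Uniqueness of Fourier coefficients\<close>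

definition fourier_exp :: "real \<Rightarrow> int \<Rightarrow> real \<Rightarrow> complex" where
  "fourier_exp a n t = exp (\<i> * of_real (2 * pi * of_int n * t / a))"

lemma fourier_exp_eq_exp: "fourier_exp a n t = exp (\<i> * of_real (2 * pi * of_int n / a) * of_real t)"
  unfolding fourier_exp_def by (simp add: algebra_simps)

lemma fourier_exp_mult: "fourier_exp a n t * fourier_exp a m t = fourier_exp a (n + m) t"
  unfolding fourier_exp_eq_exp exp_add[symmetric] by (simp add: algebra_simps add_divide_distrib)

lemma fourier_exp_0 [simp]: "fourier_exp a 0 t = 1"
  by (simp add: fourier_exp_def)

lemma fourier_exp_at_0 [simp]: "fourier_exp a n 0 = 1"
  by (simp add: fourier_exp_def)

lemma norm_fourier_exp [simp]: "norm (fourier_exp a n t) = 1"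
  unfolding fourier_exp_def by (rule norm_exp_i_times)

lemma cnj_fourier_exp: "cnj (fourier_exp a n t) = fourier_exp a (- n) t"
  unfolding fourier_exp_def by (subst exp_cnj) simp

lemma fourier_exp_periodic:
  assumes "a \<noteq> 0"
  shows "fourier_exp a n (t + a) = fourier_exp a n t"
proof -
  have "fourier_exp a n (t + a) = fourier_exp a n t * exp (2 * of_int n * pi * \<i>)"
    unfolding fourier_exp_eq_exp exp_add[symmetric] using assms by (simp add: field_simps)
  then show ?thesis
    using exp_integer_2pi[of "of_int n"] by simp
qed

lemma continuous_on_fourier_exp [continuous_intros]: "continuous_on S (fourier_exp a n)"
  unfolding fourier_exp_eq_exp by (intro continuous_intros)

lemma has_integral_fourier_exp:
  assumes "a > 0"
  shows "(fourier_exp a n has_integral (if n = 0 then a else 0)) {0..a}"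
proof (cases "n = 0")
  case True
  have "fourier_exp a 0 = (\<lambda>_. 1)" by (rule ext) simp
  then show ?thesis
    using has_integral_const_real[of "1::complex" 0 a] assms True by (simp add: scaleR_conv_of_real)
next
  case False
  define k where "k = complex_of_real (2 * pi * of_int n / a)"
  have "k \<noteq> 0" using False assms by (simp add: k_def)
  then have "(fourier_exp a n has_integral (fourier_exp a n a - fourier_exp a n 0) / (\<i> * k)) {0..a}"
    unfolding fourier_exp_eq_exp k_def[symmetric] using assms by (intro has_integral_exp_i_mult) auto
  moreover have "fourier_exp a n a = fourier_exp a n 0"
    using fourier_exp_periodic[of a n 0] assms by simp
  ultimately show ?thesis using False by simp
qed

lemma fourier_coeff_eq_integral:
  "fourier_coeff a f n = integral {0..a} (\<lambda>t. fourier_exp a (- n) t * f t) / of_real a"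
  unfolding fourier_coeff_def fourier_exp_def by (simp add: algebra_simps)

inductive trig_poly :: "real \<Rightarrow> (real \<Rightarrow> complex) \<Rightarrow> bool" for a where
  monomial: "trig_poly a (\<lambda>t. z * fourier_exp a n t)"
| add: "trig_poly a F \<Longrightarrow> trig_poly a G \<Longrightarrow> trig_poly a (\<lambda>t. F t + G t)"

lemma trig_poly_const: "trig_poly a (\<lambda>t. z)"
  using trig_poly.monomial[of a z 0] by simp

lemma trig_poly_cmult: "trig_poly a F \<Longrightarrow> trig_poly a (\<lambda>t. z * F t)"
proof (induction rule: trig_poly.induct)
  case (monomial w n)
  then show ?case using trig_poly.monomial[of a "z * w" n] by (simp add: mult.assoc)
next
  case (add F G)
  then show ?case using trig_poly.add by (simp add: distrib_left)
qed

lemma trig_poly_mult_fourier_exp: "trig_poly a F \<Longrightarrow> trig_poly a (\<lambda>t. F t * fourier_exp a m t)"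
proof (induction rule: trig_poly.induct)
  case (monomial w n)
  then show ?case using trig_poly.monomial[of a w "n + m"] by (simp add: mult.assoc fourier_exp_mult)
next
  case (add F G)
  then show ?case using trig_poly.add by (simp add: distrib_right)
qed

lemma trig_poly_mult:
  assumes "trig_poly a G" "trig_poly a F"
  shows "trig_poly a (\<lambda>t. F t * G t)"
  using assms
proof (induction G rule: trig_poly.induct)
  case (monomial w n)
  then show ?case
    using trig_poly_cmult[OF trig_poly_mult_fourier_exp[OF monomial], of w] by (simp add: algebra_simps)
next
  case (add G1 G2)
  then show ?case using trig_poly.add by (simp add: distrib_left)
qed

lemma continuous_on_trig_poly: "trig_poly a F \<Longrightarrow> continuous_on S F"
  by (induction rule: trig_poly.induct) (auto intro!: continuous_intros)

lemma trig_poly_real_polynomial_function: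
  assumes "real_polynomial_function p"
  shows "trig_poly a (\<lambda>t. of_real (p (fourier_exp a 1 t)))"
  using assms
proof (induction rule: real_polynomial_function.induct)
  case (linear p)
  then have lin: "linear p" by (rule bounded_linear.linear)
  text \<open>A real-linear functional on \<open>\<complex>\<close> is a combination of \<open>z\<close> and \<open>cnj z\<close>, and
    \<open>cnj\<close> turns \<open>fourier_exp a 1\<close> into \<open>fourier_exp a (-1)\<close>.\<close>
  have pz: "of_real (p z) = (of_real (p 1) / 2 - \<i> * of_real (p \<i>) / 2) * z
                        + (of_real (p 1) / 2 + \<i> * of_real (p \<i>) / 2) * cnj z" for z
  proof -
    have z: "z = Re z *\<^sub>R 1 + Im z *\<^sub>R \<i>" by (simp add: complex_eq_iff)
    have "p z = Re z * p 1 + Im z * p \<i>"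
      by (subst z) (simp only: linear_add[OF lin] linear_scale[OF lin] real_scaleR_def)
    then show ?thesis by (simp add: complex_eq_iff)
  qed
  have "(\<lambda>t. of_real (p (fourier_exp a 1 t))) =
      (\<lambda>t. (of_real (p 1) / 2 - \<i> * of_real (p \<i>) / 2) * fourier_exp a 1 t
          + (of_real (p 1) / 2 + \<i> * of_real (p \<i>) / 2) * fourier_exp a (- 1) t)"
    by (rule ext, subst pz) (simp only: cnj_fourier_exp)
  then show ?case by (simp only:) (intro trig_poly.add trig_poly.monomial)
next
  case (const c)
  then show ?case by (rule trig_poly_const)
next
  case (add f g)
  then show ?case by (simp add: trig_poly.add)
next
  case (mult f g)
  then show ?case by (simp add: trig_poly_mult)
qed

lemma fourier_exp_image_sphere:
  assumes "a > 0"
  shows "fourier_exp a 1 ` {0..a} = sphere 0 1"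
proof
  show "sphere 0 1 \<subseteq> fourier_exp a 1 ` {0..a}"
  proof
    fix z :: complex assume "z \<in> sphere 0 1"
    define t where "t = a * Arg2pi z / (2 * pi)"
    have "t \<in> {0..a}"
      using assms Arg2pi_ge_0[of z] Arg2pi_lt_2pi[of z] by (auto simp: t_def field_simps)
    moreover have "fourier_exp a 1 t = exp (\<i> * of_real (Arg2pi z))"
      using assms by (simp add: fourier_exp_def t_def)
    moreover have "exp (\<i> * of_real (Arg2pi z)) = z"
      using Arg2pi[of z] \<open>z \<in> sphere 0 1\<close> by (simp add: is_Arg_def)
    ultimately show "z \<in> fourier_exp a 1 ` {0..a}" by force
  qed
qed auto

lemma continuous_periodic_factors_through_circle:
  fixes \<phi> :: "real \<Rightarrow> real"
  assumes a: "a > 0" and cont: "continuous_on {0..a} \<phi>" and per: "\<phi> 0 = \<phi> a"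
  obtains \<Psi> where "continuous_on (sphere 0 1) \<Psi>"
    and "\<And>t. t \<in> {0..a} \<Longrightarrow> \<Psi> (fourier_exp a 1 t) = \<phi> t"
proof
  define E where "E = fourier_exp a 1"
  define \<Psi> where "\<Psi> z = \<phi> (a * Arg2pi z / (2 * pi))" for z
  show \<Psi>E: "\<Psi> (fourier_exp a 1 t) = \<phi> t" if "t \<in> {0..a}" for t
  proof (cases "t = a")
    case True
    have "fourier_exp a 1 a = 1"
      using fourier_exp_periodic[of a 1 0] a by simp
    then show ?thesis using True per Arg2pi_of_real[of 1] by (simp add: \<Psi>_def)
  next
    case False
    then have "0 \<le> 2 * pi * t / a" "2 * pi * t / a < 2 * pi"
      using that a by (auto simp: field_simps)
    then have "Arg2pi (fourier_exp a 1 t) = 2 * pi * t / a"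
      using Arg2pi_exp[of "\<i> * of_real (2 * pi * t / a)"] by (simp add: fourier_exp_def)
    then show ?thesis using a by (simp add: \<Psi>_def)
  qed
  text \<open>The circle carries the quotient topology of \<open>[0, a]\<close> under \<open>E\<close>, since \<open>E\<close> is a
    continuous surjection from a compact space.\<close>
  have E_image: "E ` {0..a} = sphere 0 1"
    unfolding E_def using a by (rule fourier_exp_image_sphere)
  have quot: "quotient_map (top_of_set {0..a}) (top_of_set (sphere 0 1)) E"
    unfolding quotient_map_def
  proof (intro conjI allI impI)
    show "E ` topspace (top_of_set {0..a}) = topspace (top_of_set (sphere 0 1))"
      using E_image by simp
    fix U assume "U \<subseteq> topspace (top_of_set (sphere (0::complex) 1))"
    then have "openin (top_of_set {0..a}) ({0..a} \<inter> E -` U) = openin (top_of_set (sphere 0 1)) U"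
      using E_image
      by (intro Abstract_Topology_2.continuous_imp_quotient_map) (auto simp: E_def continuous_on_fourier_exp)
    moreover have "{x \<in> topspace (top_of_set {0..a}). E x \<in> U} = {0..a} \<inter> E -` U" by auto
    ultimately show "openin (top_of_set {0..a}) {x \<in> topspace (top_of_set {0..a}). E x \<in> U} =
          openin (top_of_set (sphere 0 1)) U" by simp
  qed
  have "continuous_map (top_of_set {0..a}) euclidean (\<Psi> \<circ> E)"
    using continuous_on_eq[OF cont, of "\<Psi> \<circ> E"] \<Psi>E by (simp add: E_def)
  from continuous_compose_quotient_map[OF quot this]
  show "continuous_on (sphere 0 1) \<Psi>" by simp
qed

lemma eq_0_if_norm_le_mult_epsilon:
  fixes x :: "'a::real_normed_vector"
  assumes "\<And>e. e > 0 \<Longrightarrow> norm x \<le> e * K"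
  shows "x = 0"
proof -
  have "norm x \<le> 0 + e" if "e > 0" for e
  proof -
    have "norm x \<le> e / (\<bar>K\<bar> + 1) * K"
      using assms[of "e / (\<bar>K\<bar> + 1)"] that by simp
    also have "\<dots> \<le> e / (\<bar>K\<bar> + 1) * \<bar>K\<bar>"
      using that by (intro mult_left_mono) auto
    also have "\<dots> \<le> e"
      using that by (simp add: field_simps)
    finally show ?thesis by simp
  qed
  then show ?thesis
    using field_le_epsilon[of "norm x" 0] by simp
qed

lemma norm_integral_mult_le_if_approx:
  fixes \<phi> \<psi> h :: "real \<Rightarrow> complex"
  assumes "(\<lambda>t. \<phi> t * h t) integrable_on S" "(\<lambda>t. \<psi> t * h t) integrable_on S"
    and "(\<lambda>t. norm (h t)) integrable_on S"
    and "integral S (\<lambda>t. \<psi> t * h t) = 0"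
    and "\<And>t. t \<in> S \<Longrightarrow> norm (\<phi> t - \<psi> t) \<le> e"
  shows "norm (integral S (\<lambda>t. \<phi> t * h t)) \<le> e * integral S (\<lambda>t. norm (h t))"
proof -
  have "integral S (\<lambda>t. \<phi> t * h t) = integral S (\<lambda>t. (\<phi> t - \<psi> t) * h t)"
    using integral_diff[OF assms(1,2)] assms(4) by (simp add: left_diff_distrib)
  also have "norm \<dots> \<le> integral S (\<lambda>t. e * norm (h t))"
  proof (rule integral_norm_bound_integral)
    show "(\<lambda>t. (\<phi> t - \<psi> t) * h t) integrable_on S"
      using integrable_diff[OF assms(1,2)] by (simp add: left_diff_distrib)
    show "(\<lambda>t. e * norm (h t)) integrable_on S"
      using integrable_on_cmult_left[OF assms(3), of e] by simp
    show "norm ((\<phi> t - \<psi> t) * h t) \<le> e * norm (h t)" if "t \<in> S" for t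
      using assms(5)[OF that] by (simp add: norm_mult mult_right_mono)
  qed
  finally show ?thesis by simp
qed

context
  fixes a :: real and h :: "real \<Rightarrow> complex"
  assumes a_pos: "a > 0"
    and h_integrable: "h absolutely_integrable_on {0..a}"
    and h_orthogonal: "\<And>n. integral {0..a} (\<lambda>t. fourier_exp a n t * h t) = 0"
begin

lemma integral_trig_poly_mult_eq_0: "trig_poly a F \<Longrightarrow> integral {0..a} (\<lambda>t. F t * h t) = 0"
proof (induction rule: trig_poly.induct)
  case (monomial z n)
  then show ?case
    using h_orthogonal[of n] by (simp add: mult.assoc integral_mult_right)
next
  case (add F G)
  have "(\<lambda>t. F t * h t) integrable_on {0..a}" "(\<lambda>t. G t * h t) integrable_on {0..a}"
    using add.hyps by (auto intro!: integrable_continuous_mult h_integrable continuous_on_trig_poly)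
  then show ?case using add.IH by (simp add: distrib_right integral_add)
qed

lemma integral_continuous_periodic_mult_eq_0:
  fixes \<phi> :: "real \<Rightarrow> real"
  assumes cont: "continuous_on {0..a} \<phi>" and per: "\<phi> 0 = \<phi> a"
  shows "integral {0..a} (\<lambda>t. of_real (\<phi> t) * h t) = 0"
proof (rule eq_0_if_norm_le_mult_epsilon)
  obtain \<Psi> where \<Psi>: "continuous_on (sphere 0 1) \<Psi>"
    and \<Psi>\<phi>: "\<And>t. t \<in> {0..a} \<Longrightarrow> \<Psi> (fourier_exp a 1 t) = \<phi> t"
    using continuous_periodic_factors_through_circle[OF a_pos cont per] by blast
  fix e :: real assume "e > 0"
  text \<open>Stone--Weierstrass on the circle; polynomials in \<open>fourier_exp a 1\<close> are trigonometric
    polynomials, against which \<open>h\<close> integrates to zero.\<close>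
  obtain p where p: "real_polynomial_function p"
    and p_approx: "\<And>z. z \<in> sphere 0 1 \<Longrightarrow> \<bar>\<Psi> z - p z\<bar> < e"
    using Stone_Weierstrass_real_polynomial_function[OF compact_sphere \<Psi> \<open>e > 0\<close>] by blast
  define P where "P t = complex_of_real (p (fourier_exp a 1 t))" for t
  have P: "trig_poly a P"
    unfolding P_def by (rule trig_poly_real_polynomial_function[OF p])
  show "norm (integral {0..a} (\<lambda>t. of_real (\<phi> t) * h t)) \<le> e * integral {0..a} (\<lambda>t. norm (h t))"
  proof (rule norm_integral_mult_le_if_approx)
    show "(\<lambda>t. of_real (\<phi> t) * h t) integrable_on {0..a}"
      by (intro integrable_continuous_mult h_integrable continuous_on_of_real cont)
    show "(\<lambda>t. P t * h t) integrable_on {0..a}"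
      by (intro integrable_continuous_mult h_integrable continuous_on_trig_poly[OF P])
    show "(\<lambda>t. norm (h t)) integrable_on {0..a}"
      using h_integrable by (simp add: absolutely_integrable_on_def)
    show "integral {0..a} (\<lambda>t. P t * h t) = 0"
      by (rule integral_trig_poly_mult_eq_0[OF P])
    fix t assume "t \<in> {0..a}"
    then show "norm (complex_of_real (\<phi> t) - P t) \<le> e"
      using p_approx[of "fourier_exp a 1 t"] \<Psi>\<phi>[of t] by (simp add: P_def flip: of_real_diff)
  qed
qed

end

lemma tendsto_ramp:
  "(\<lambda>k. max 0 (min 1 (real (Suc k) * d))) \<longlonglongrightarrow> (if d > 0 then 1 else 0)"
proof (cases "d > 0")
  case True
  obtain N :: nat where N: "1 / d < real N"
    using reals_Archimedean2 by blast
  have "1 \<le> real (Suc k) * d" if "N \<le> k" for k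
  proof -
    have "1 / d < real (Suc k)"
      using N of_nat_mono[OF that] by simp
    then show ?thesis
      using True by (simp add: divide_less_eq)
  qed
  then have "\<forall>\<^sub>F k in sequentially. max 0 (min 1 (real (Suc k) * d)) = 1"
    unfolding eventually_sequentially by (intro exI[of _ N] allI impI) simp
  then show ?thesis
    using True by (simp add: tendsto_eventually)
next
  case False
  have "max 0 (min 1 (real (Suc k) * d)) = 0" for k
  proof -
    have "real (Suc k) * d \<le> 0"
      using False by (intro mult_nonneg_nonpos) auto
    then show ?thesis
      by (metis max_absorb1 min_absorb2 order.trans zero_le_one)
  qed
  then show ?thesis
    using False by simp
qed

lemma integral_eq_0_if_orthogonal_to_bumps:
  fixes h :: "real \<Rightarrow> complex"
  assumes h: "h absolutely_integrable_on {b..c}"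
    and orth: "\<And>\<phi>. continuous_on {b..c} \<phi> \<Longrightarrow> \<phi> b = 0 \<Longrightarrow> \<phi> c = 0 \<Longrightarrow>
                  integral {b..c} (\<lambda>u. of_real (\<phi> u) * h u) = 0"
    and st: "b \<le> s" "s \<le> t" "t \<le> c"
  shows "integral {s..t} h = 0"
proof -
  text \<open>Trapezoids of slope \<open>k + 1\<close> supported in \<open>[s, t]\<close> increase to the indicator of \<open>]s, t[\<close>.\<close>
  define \<phi> :: "nat \<Rightarrow> real \<Rightarrow> real" where
    "\<phi> k u = max 0 (min 1 (real (Suc k) * min (u - s) (t - u)))" for k u
  define G where "G u = (if u \<in> box s t then h u else 0)" for u
  have \<phi>_cont: "continuous_on {b..c} (\<phi> k)" for k
    unfolding \<phi>_def by (intro continuous_intros)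
  have \<phi>_vanish: "\<phi> k u = 0" if "u \<notin> box s t" for k u
  proof -
    have "min (u - s) (t - u) \<le> 0" using that by auto
    then have "real (Suc k) * min (u - s) (t - u) \<le> 0" by (simp add: mult_nonneg_nonpos)
    then show ?thesis by (simp add: \<phi>_def)
  qed
  have lim: "(\<lambda>k. of_real (\<phi> k u) * h u) \<longlonglongrightarrow> G u" for u
  proof -
    have G: "G u = of_real (if min (u - s) (t - u) > 0 then 1 else 0) * h u"
      by (simp add: G_def)
    show ?thesis
      unfolding \<phi>_def G by (rule tendsto_mult_right[OF tendsto_of_real[OF tendsto_ramp]])
  qed
  have norm_h: "(\<lambda>u. norm (h u)) integrable_on {b..c}"
    using h by (simp add: absolutely_integrable_on_def)
  have "(\<lambda>k. integral {b..c} (\<lambda>u. of_real (\<phi> k u) * h u)) \<longlonglongrightarrow> integral {b..c} G"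
  proof (rule dominated_convergence(2)[OF _ norm_h _ lim])
    show "(\<lambda>u. of_real (\<phi> k u) * h u) integrable_on {b..c}" for k
      by (intro integrable_continuous_mult h continuous_on_of_real \<phi>_cont)
    show "norm (of_real (\<phi> k u) * h u) \<le> norm (h u)" for k u
      by (simp add: norm_mult \<phi>_def mult_left_le_one_le)
  qed
  moreover have "integral {b..c} (\<lambda>u. of_real (\<phi> k u) * h u) = 0" for k
    using st by (intro orth \<phi>_cont \<phi>_vanish) auto
  ultimately have "integral {b..c} G = 0"
    by (simp add: LIMSEQ_const_iff)
  moreover have "integral {b..c} G = integral (box s t \<inter> {b..c}) h"
    unfolding G_def by (rule integral_restrict_Int)
  moreover have "box s t \<inter> {b..c} = box s t"
    using st by auto
  ultimately show ?thesis
    using integral_open_interval[of s t h] by simp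
qed

lemma negligible_nonzero_if_interval_integrals_eq_0:
  fixes h :: "real \<Rightarrow> 'b::euclidean_space"
  assumes h: "h integrable_on {b..c}"
    and zero: "\<And>s t. b \<le> s \<Longrightarrow> s \<le> t \<Longrightarrow> t \<le> c \<Longrightarrow> integral {s..t} h = 0"
  shows "negligible {u \<in> {b..c}. h u \<noteq> 0}"
proof -
  define H where "H u = (if u \<in> {b..c} then h u else 0)" for u
  have "H integrable_on UNIV"
    unfolding H_def using h by (subst integrable_restrict_UNIV)
  then have H_int: "H integrable_on cbox x y" for x y :: real
    by (rule integrable_on_subcbox) simp
  have H_zero: "integral {x..x + e} H = 0" for x e :: real
  proof -
    have "integral {x..x + e} H = integral ({b..c} \<inter> {x..x + e}) h"
      unfolding H_def by (rule integral_restrict_Int)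
    also have "{b..c} \<inter> {x..x + e} = {max b x..min c (x + e)}" by auto
    also have "integral \<dots> h = 0"
      by (cases "max b x \<le> min c (x + e)") (auto intro: zero)
    finally show ?thesis .
  qed
  text \<open>Lebesgue's differentiation theorem: almost every point is a Lebesgue point of \<open>H\<close>.\<close>
  obtain N where N: "negligible N"
    and lebesgue_point: "\<And>x e. x \<notin> N \<Longrightarrow> 0 < e \<Longrightarrow> \<exists>d>0. \<forall>h. 0 < h \<and> h < d \<longrightarrow>
        norm (integral (cbox x (x + h *\<^sub>R One)) H /\<^sub>R h ^ DIM(real) - H x) < e"
    using integrable_ccontinuous_explicit[of H] H_int by blast
  have "H x = 0" if x: "x \<notin> N" for x
  proof (rule ccontr)
    assume "H x \<noteq> 0"
    then have "\<exists>d>0. \<forall>h::real. 0 < h \<and> h < d \<longrightarrow> norm (H x) < norm (H x)"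
      using lebesgue_point[OF x, of "norm (H x)"] by (auto simp: H_zero)
    then show False by (meson dense less_irrefl)
  qed
  then have "{u \<in> {b..c}. h u \<noteq> 0} \<subseteq> N"
    unfolding H_def by (metis (mono_tags, lifting) mem_Collect_eq subsetI)
  then show ?thesis using N negligible_subset by blast
qed

lemma negligible_nonzero_if_fourier_coeffs_eq_0:
  fixes h :: "real \<Rightarrow> complex"
  assumes a: "a > 0" and h: "h absolutely_integrable_on {0..a}"
    and orth: "\<And>n. integral {0..a} (\<lambda>t. fourier_exp a n t * h t) = 0"
  shows "negligible {t \<in> {0..a}. h t \<noteq> 0}"
proof (rule negligible_nonzero_if_interval_integrals_eq_0)
  show "h integrable_on {0..a}"
    using h by (rule set_lebesgue_integral_eq_integral)
  fix s t assume st: "0 \<le> s" "s \<le> t" "t \<le> a"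
  show "integral {s..t} h = 0"
    by (rule integral_eq_0_if_orthogonal_to_bumps[OF h _ st])
       (rule integral_continuous_periodic_mult_eq_0[OF a h orth]; simp)
qed

lemma periodic_int_multiple:
  assumes "\<And>t. h (t + a) = h t"
  shows "h (t + of_int k * a) = h t"
proof (induction k arbitrary: t rule: int_induct[where k = 0])
  case (step1 i)
  then show ?case using assms[of "t + of_int i * a"] by (simp add: algebra_simps)
next
  case (step2 i)
  then show ?case using assms[of "t + of_int (i - 1) * a"] by (simp add: algebra_simps)
qed simp

lemma negligible_nonzero_periodic:
  fixes h :: "real \<Rightarrow> 'b::zero"
  assumes a: "a > 0" and per: "\<And>t. h (t + a) = h t"
    and period: "negligible {t \<in> {0..a}. h t \<noteq> 0}"
  shows "negligible {t. h t \<noteq> 0}"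
proof (rule negligible_subset)
  define N where "N = {t \<in> {0..a}. h t \<noteq> 0}"
  show "negligible (\<Union>k::int. (+) (of_int k * a) ` N)"
    using period by (intro negligible_countable_Union) (auto simp: N_def negligible_translation)
  show "{t. h t \<noteq> 0} \<subseteq> (\<Union>k::int. (+) (of_int k * a) ` N)"
  proof
    fix t assume "t \<in> {t. h t \<noteq> 0}"
    define k where "k = \<lfloor>t / a\<rfloor>"
    have "of_int k * a \<le> t" "t < (of_int k + 1) * a"
      using floor_divide_lower[OF a] floor_divide_upper[OF a] by (auto simp: k_def)
    moreover have "h (t - of_int k * a) = h t"
      using periodic_int_multiple[of h a "t - of_int k * a" k] per by simp
    ultimately have "t - of_int k * a \<in> N"
      using \<open>t \<in> {t. h t \<noteq> 0}\<close> by (auto simp: N_def algebra_simps)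
    then show "t \<in> (\<Union>k::int. (+) (of_int k * a) ` N)"
      by (auto intro!: exI[of _ k] image_eqI[of _ _ "t - of_int k * a"])
  qed
qed

section \<open>Primitives of exponential series\<close>

definition exp_series_primitive ::
    "(nat \<Rightarrow> complex) \<Rightarrow> (nat \<Rightarrow> real) \<Rightarrow> complex \<Rightarrow> real \<Rightarrow> complex" where
  "exp_series_primitive c \<omega> \<xi> t =
     (\<Sum>m. c m * exp (\<i> * (\<xi> + of_real (\<omega> m)) * of_real t) / (\<i> * (\<xi> + of_real (\<omega> m))))"

context
  fixes c :: "nat \<Rightarrow> complex" and \<omega> :: "nat \<Rightarrow> real" and \<xi> :: complex
  assumes summable_c: "summable (\<lambda>m. norm (c m))"
    and nonresonant: "\<And>m. \<xi> + of_real (\<omega> m) \<noteq> 0"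
    and summable_weighted: "summable (\<lambda>m. norm (c m) / norm (\<xi> + of_real (\<omega> m)))"
begin

lemma norm_primitive_term:
  "norm (c m * exp (\<i> * (\<xi> + of_real (\<omega> m)) * of_real t) / (\<i> * (\<xi> + of_real (\<omega> m))))
     = exp (- Im \<xi> * t) * (norm (c m) / norm (\<xi> + of_real (\<omega> m)))"
  by (simp add: norm_mult norm_divide norm_exp_i_mult)

lemma summable_norm_primitive_terms:
  "summable (\<lambda>m. norm (c m * exp (\<i> * (\<xi> + of_real (\<omega> m)) * of_real t) / (\<i> * (\<xi> + of_real (\<omega> m)))))"
  unfolding norm_primitive_term by (rule summable_mult[OF summable_weighted])

lemma norm_exp_series_primitive_le:
  "norm (exp_series_primitive c \<omega> \<xi> t)
     \<le> exp (- Im \<xi> * t) * (\<Sum>m. norm (c m) / norm (\<xi> + of_real (\<omega> m)))"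
proof -
  have "norm (exp_series_primitive c \<omega> \<xi> t)
      \<le> (\<Sum>m. exp (- Im \<xi> * t) * (norm (c m) / norm (\<xi> + of_real (\<omega> m))))"
    unfolding exp_series_primitive_def norm_primitive_term[symmetric]
    by (rule summable_norm[OF summable_norm_primitive_terms])
  also have "\<dots> = exp (- Im \<xi> * t) * (\<Sum>m. norm (c m) / norm (\<xi> + of_real (\<omega> m)))"
    by (rule suminf_mult[OF summable_weighted])
  finally show ?thesis .
qed

lemma exp_mult_exp_series:
  "exp (\<i> * \<xi> * of_real u) * (\<Sum>m. c m * exp (\<i> * of_real (\<omega> m) * of_real u))
     = (\<Sum>m. c m * exp (\<i> * (\<xi> + of_real (\<omega> m)) * of_real u))"
proof -
  have "summable (\<lambda>m. c m * exp (\<i> * of_real (\<omega> m) * of_real u))"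
    by (rule summable_norm_cancel) (simp add: norm_mult summable_c norm_exp_i_mult)
  then show ?thesis
    by (simp add: suminf_mult[symmetric] distrib_left distrib_right exp_add mult.left_commute)
qed

lemma has_integral_exp_series:
  assumes "s \<le> t"
  shows "((\<lambda>u. exp (\<i> * \<xi> * of_real u) * (\<Sum>m. c m * exp (\<i> * of_real (\<omega> m) * of_real u)))
           has_integral (exp_series_primitive c \<omega> \<xi> t - exp_series_primitive c \<omega> \<xi> s)) {s..t}"
proof -
  define k where "k m = \<xi> + of_real (\<omega> m)" for m
  define F where "F m u = c m * exp (\<i> * k m * of_real u)" for m u
  define P where "P m u = c m * exp (\<i> * k m * of_real u) / (\<i> * k m)" for m u
  define K where "K = exp (\<bar>Im \<xi>\<bar> * (\<bar>s\<bar> + \<bar>t\<bar>))"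
  have "norm (F m u) \<le> norm (c m) * K" if "u \<in> {s..t}" for m u
    using norm_exp_i_mult_le[OF that, of "k m"]
    by (simp add: F_def K_def k_def norm_mult mult_left_mono)
  moreover have "continuous_on {s..t} (F m)" for m
    unfolding F_def by (intro continuous_intros)
  ultimately have termwise:
    "(\<lambda>m. integral {s..t} (F m)) sums integral {s..t} (\<lambda>u. \<Sum>m. F m u)"
    "(\<lambda>u. \<Sum>m. F m u) integrable_on {s..t}"
    using sums_integral_suminf[OF summable_mult2[OF summable_c]] by blast+
  have "integral {s..t} (F m) = P m t - P m s" for m
  proof -
    have "k m \<noteq> 0" using nonresonant by (simp add: k_def)
    from has_integral_mult_right[OF has_integral_exp_i_mult[OF this assms], of "c m"]
    have "(F m has_integral P m t - P m s) {s..t}"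
      unfolding F_def[abs_def] P_def by (simp add: diff_divide_distrib right_diff_distrib)
    then show ?thesis by (rule integral_unique)
  qed
  moreover have "(\<lambda>m. P m t - P m s) sums (exp_series_primitive c \<omega> \<xi> t - exp_series_primitive c \<omega> \<xi> s)"
    unfolding exp_series_primitive_def P_def k_def
    by (intro sums_diff summable_sums summable_norm_cancel[OF summable_norm_primitive_terms])
  ultimately have "integral {s..t} (\<lambda>u. \<Sum>m. F m u)
      = exp_series_primitive c \<omega> \<xi> t - exp_series_primitive c \<omega> \<xi> s"
    using termwise(1) sums_unique2 by force
  moreover have "(\<lambda>u. exp (\<i> * \<xi> * of_real u) * (\<Sum>m. c m * exp (\<i> * of_real (\<omega> m) * of_real u)))
      = (\<lambda>u. \<Sum>m. F m u)"
    by (rule ext) (simp only: exp_mult_exp_series F_def k_def)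
  ultimately show ?thesis
    using integrable_integral[OF termwise(2)] by (simp only:)
qed

lemma continuous_on_exp_series:
  "continuous_on S (\<lambda>u. \<Sum>m. c m * exp (\<i> * of_real (\<omega> m) * of_real u))"
proof (rule uniform_limit_theorem)
  show "uniform_limit S (\<lambda>k u. \<Sum>m<k. c m * exp (\<i> * of_real (\<omega> m) * of_real u))
      (\<lambda>u. \<Sum>m. c m * exp (\<i> * of_real (\<omega> m) * of_real u)) sequentially"
    by (rule Weierstrass_m_test[OF _ summable_c]) (simp add: norm_mult norm_exp_i_mult)
qed (auto intro!: always_eventually continuous_intros)

lemma has_vector_derivative_exp_series_primitive:
  "(exp_series_primitive c \<omega> \<xi> has_vector_derivative
      exp (\<i> * \<xi> * of_real t) * (\<Sum>m. c m * exp (\<i> * of_real (\<omega> m) * of_real t))) (at t)"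
proof -
  define \<Phi> where
    "\<Phi> = (\<lambda>u. exp (\<i> * \<xi> * of_real u) * (\<Sum>m. c m * exp (\<i> * of_real (\<omega> m) * of_real u)))"
  define P where "P = exp_series_primitive c \<omega> \<xi>"
  have "continuous_on {t - 1..t + 1} \<Phi>"
    unfolding \<Phi>_def by (intro continuous_intros continuous_on_exp_series)
  then have "((\<lambda>u. integral {t - 1..u} \<Phi>) has_vector_derivative \<Phi> t) (at t within {t - 1..t + 1})"
    by (rule integral_has_vector_derivative) simp
  then have "((\<lambda>u. integral {t - 1..u} \<Phi>) has_vector_derivative \<Phi> t) (at t)"
    using at_within_Icc_at[of "t - 1" t "t + 1"] by simp
  from has_vector_derivative_add[OF has_vector_derivative_const this]
  have deriv: "((\<lambda>u. P (t - 1) + integral {t - 1..u} \<Phi>) has_vector_derivative \<Phi> t) (at t)"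
    by simp
  have eq: "P (t - 1) + integral {t - 1..u} \<Phi> = P u" if "u \<in> {t - 1<..<t + 1}" for u
    using integral_unique[OF has_integral_exp_series[of "t - 1" u]] that by (simp add: \<Phi>_def P_def)
  have "(P has_vector_derivative \<Phi> t) (at t)"
    by (rule has_vector_derivative_transform_within_open[OF deriv, of "{t - 1<..<t + 1}"])
       (simp_all add: eq)
  then show ?thesis by (simp add: \<Phi>_def P_def)
qed

end

section \<open>Weighted improper integrals\<close>

lemma convergent_integral_at_top_if_tails_small:
  fixes F :: "real \<Rightarrow> 'a::banach"
  assumes integrable: "\<And>T. x \<le> T \<Longrightarrow> F integrable_on {x..T}"
    and tails: "\<And>s T. x \<le> s \<Longrightarrow> s \<le> T \<Longrightarrow> norm (integral {s..T} F) \<le> \<beta> s"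
    and \<beta>: "(\<beta> \<longlongrightarrow> 0) at_top"
  obtains L where "((\<lambda>T. integral {x..T} F) \<longlongrightarrow> L) at_top"
proof -
  define R where "R T = integral {x..T} F" for T
  have "cauchy_filter (filtermap R at_top)"
    unfolding cauchy_filter_metric_filtermap
  proof (intro allI impI)
    fix e :: real assume "e > 0"
    obtain T0 where T0: "\<And>T. T \<ge> T0 \<Longrightarrow> \<beta> T < e"
      using order_tendstoD(2)[OF \<beta> \<open>e > 0\<close>] by (auto simp: eventually_at_top_linorder)
    define T1 where "T1 = max T0 x"
    have close: "dist (R S) (R T) < e" if "T1 \<le> S" "S \<le> T" for S T
    proof -
      have "R T = R S + integral {S..T} F"
        unfolding R_def
        using Henstock_Kurzweil_Integration.integral_combine[where a = x and c = S and b = T and f = F]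
          that integrable[of T]
        by (simp add: T1_def)
      then have "dist (R S) (R T) = norm (integral {S..T} F)"
        by (simp add: dist_norm norm_minus_commute)
      also have "\<dots> < e"
        using tails[of S T] T0[of S] that by (simp add: T1_def)
      finally show ?thesis .
    qed
    show "\<exists>P. eventually P at_top \<and> (\<forall>S T. P S \<and> P T \<longrightarrow> dist (R S) (R T) < e)"
    proof (intro exI[of _ "\<lambda>T. T1 \<le> T"] conjI allI impI)
      fix S T assume "T1 \<le> S \<and> T1 \<le> T"
      then show "dist (R S) (R T) < e"
        using close[of S T] close[of T S] by (cases "S \<le> T") (auto simp: dist_commute)
    qed (rule eventually_ge_at_top)
  qed
  then obtain L where "filtermap R at_top \<le> nhds L"
    using cauchy_filter_complete_converges[of "filtermap R at_top" UNIV]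
    by (auto simp: filtermap_bot_iff)
  then show ?thesis
    using that[of L] unfolding R_def[abs_def] filterlim_def by simp
qed

context
  fixes x :: real and w w' :: "real \<Rightarrow> real"
  assumes w_deriv: "\<And>t. x \<le> t \<Longrightarrow> (w has_real_derivative w' t) (at t)"
    and w'_cont: "continuous_on {x..} w'"
    and w'_nonpos: "\<And>t. x \<le> t \<Longrightarrow> w' t \<le> 0"
    and w_lim: "(w \<longlongrightarrow> 0) at_top"
begin

lemma weight_antimono:
  assumes "x \<le> s" "s \<le> t"
  shows "w t \<le> w s"
proof (rule DERIV_nonpos_imp_nonincreasing[OF \<open>s \<le> t\<close>])
  fix u assume "s \<le> u" "u \<le> t"
  then have "x \<le> u" using assms by simp
  then show "\<exists>y. (w has_real_derivative y) (at u) \<and> y \<le> 0"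
    using w_deriv w'_nonpos by blast
qed

lemma weight_nonneg:
  assumes "x \<le> t"
  shows "0 \<le> w t"
proof (rule tendsto_upperbound[OF w_lim _ trivial_limit_at_top_linorder])
  show "\<forall>\<^sub>F T in at_top. w T \<le> w t"
    using eventually_ge_at_top[of t] by eventually_elim (use assms weight_antimono in blast)
qed

lemma has_integral_neg_weight_deriv:
  assumes "x \<le> s" "s \<le> T"
  shows "((\<lambda>t. - w' t) has_integral (w s - w T)) {s..T}"
proof -
  have "((\<lambda>t. - w' t) has_integral (- w T - - w s)) {s..T}"
  proof (rule fundamental_theorem_of_calculus)
    fix t assume "t \<in> {s..T}"
    then have "((\<lambda>t. - w t) has_real_derivative - w' t) (at t)"
      using assms by (intro DERIV_minus w_deriv) auto
    then have "((\<lambda>t. - w t) has_real_derivative - w' t) (at t within {s..T})"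
      by (rule has_field_derivative_at_within)
    then show "((\<lambda>t. - w t) has_vector_derivative - w' t) (at t within {s..T})"
      by (simp add: has_real_derivative_iff_has_vector_derivative)
  qed (use assms in simp)
  then show ?thesis by simp
qed

context
  fixes G \<Phi> :: "real \<Rightarrow> complex" and M :: real
  assumes G_cont: "continuous_on {x..} G"
    and G_deriv: "\<And>t. x < t \<Longrightarrow> (G has_vector_derivative \<Phi> t) (at t)"
    and G_bound: "\<And>t. x \<le> t \<Longrightarrow> norm (G t) \<le> M"
begin

lemma integrable_mult_weight_deriv:
  "(\<lambda>t. G t * of_real (w' t)) integrable_on {s..T}" if "x \<le> s" for s T
proof -
  have "continuous_on {s..T} G" "continuous_on {s..T} w'"
    using that by (auto intro: continuous_on_subset[OF G_cont] continuous_on_subset[OF w'_cont])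
  then show ?thesis
    by (intro integrable_continuous_interval continuous_intros)
qed

lemma norm_integral_mult_weight_deriv_le:
  assumes "x \<le> s" "s \<le> T"
  shows "norm (integral {s..T} (\<lambda>t. G t * of_real (w' t))) \<le> M * (w s - w T)"
proof -
  have "norm (integral {s..T} (\<lambda>t. G t * of_real (w' t))) \<le> integral {s..T} (\<lambda>t. M * - w' t)"
  proof (rule integral_norm_bound_integral)
    show "(\<lambda>t. G t * of_real (w' t)) integrable_on {s..T}"
      using assms(1) by (rule integrable_mult_weight_deriv)
    show "(\<lambda>t. M * - w' t) integrable_on {s..T}"
      using integrable_on_cmult_left[OF has_integral_integrable[OF has_integral_neg_weight_deriv[OF assms]],
          of M] by simp
    fix t assume "t \<in> {s..T}"
    then have "norm (G t) \<le> M" "w' t \<le> 0"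
      using assms G_bound w'_nonpos by auto
    then show "norm (G t * of_real (w' t)) \<le> M * - w' t"
      using mult_right_mono_neg[of "norm (G t)" M "w' t"] by (simp add: norm_mult)
  qed
  also have "\<dots> = M * (w s - w T)"
    using integral_unique[OF has_integral_neg_weight_deriv[OF assms]] by (metis integral_mult_right)
  finally show ?thesis .
qed

lemma has_integral_mult_weight_by_parts:
  assumes "x \<le> T"
  shows "((\<lambda>t. \<Phi> t * of_real (w t)) has_integral
           (G T * of_real (w T) - G x * of_real (w x) - integral {x..T} (\<lambda>t. G t * of_real (w' t))))
         {x..T}"
proof (rule integration_by_parts_interior[OF bounded_bilinear_mult assms])
  show "continuous_on {x..T} G"
    by (rule continuous_on_subset[OF G_cont]) auto
  show "continuous_on {x..T} (\<lambda>t. complex_of_real (w t))"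
    by (intro continuous_on_of_real continuous_at_imp_continuous_on ballI DERIV_isCont[OF w_deriv])
       simp
  show "(G has_vector_derivative \<Phi> t) (at t)" if "t \<in> {x<..<T}" for t
    using that by (intro G_deriv) auto
  show "((\<lambda>t. of_real (w t)) has_vector_derivative of_real (w' t)) (at t)" if "t \<in> {x<..<T}" for t
    using that by (intro has_vector_derivative_of_real w_deriv) auto
  show "((\<lambda>t. G t * of_real (w' t)) has_integral
      (G T * of_real (w T) - G x * of_real (w x)
        - (G T * of_real (w T) - G x * of_real (w x) - integral {x..T} (\<lambda>t. G t * of_real (w' t)))))
      {x..T}"
  proof -
    have cancel: "a - b - (a - b - c) = c" for a b c :: complex by simp
    have "(\<lambda>t. G t * of_real (w' t)) integrable_on {x..T}"
      by (rule integrable_mult_weight_deriv) simp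
    from integrable_integral[OF this] show ?thesis
      by (simp only: cancel)
  qed
qed

lemma norm_integral_mult_weight_le:
  assumes "x \<le> T"
  shows "norm (integral {x..T} (\<lambda>t. \<Phi> t * of_real (w t))) \<le> 2 * M * w x"
proof -
  define R where "R = integral {x..T} (\<lambda>t. G t * of_real (w' t))"
  have "norm (integral {x..T} (\<lambda>t. \<Phi> t * of_real (w t)))
      = norm (G T * of_real (w T) - G x * of_real (w x) - R)"
    unfolding R_def using has_integral_mult_weight_by_parts[OF assms] by (simp add: integral_unique)
  also have "\<dots> \<le> norm (G T) * w T + norm (G x) * w x + norm R"
    using weight_nonneg[OF assms] weight_nonneg[of x]
    by (smt (verit) norm_mult norm_of_real norm_triangle_ineq4)
  also have "\<dots> \<le> M * w T + M * w x + M * (w x - w T)"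
    using G_bound[OF assms] G_bound[of x] weight_nonneg[OF assms] weight_nonneg[of x]
      norm_integral_mult_weight_deriv_le[of x T] assms
    by (intro add_mono mult_right_mono) (simp_all add: R_def)
  also have "\<dots> = 2 * M * w x"
    by (simp add: algebra_simps)
  finally show ?thesis .
qed

lemma convergent_integral_mult_weight_deriv:
  obtains L where "((\<lambda>T. integral {x..T} (\<lambda>t. G t * of_real (w' t))) \<longlongrightarrow> L) at_top"
proof (rule convergent_integral_at_top_if_tails_small[where \<beta> = "\<lambda>s. M * w s"])
  show "(\<lambda>t. G t * of_real (w' t)) integrable_on {x..T}" for T
    by (rule integrable_mult_weight_deriv) simp
  show "norm (integral {s..T} (\<lambda>t. G t * of_real (w' t))) \<le> M * w s" if "x \<le> s" "s \<le> T" for s T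
  proof -
    have "0 \<le> M"
      using G_bound[of x] norm_ge_zero order_trans by blast
    then have "0 \<le> M * w T"
      using that by (intro mult_nonneg_nonneg weight_nonneg) auto
    then show ?thesis
      using norm_integral_mult_weight_deriv_le[OF that] by (simp add: right_diff_distrib)
  qed
  show "((\<lambda>s. M * w s) \<longlongrightarrow> 0) at_top"
    using tendsto_mult_right_zero[OF w_lim] by simp
qed

lemma tendsto_mult_weight_0: "((\<lambda>T. G T * of_real (w T)) \<longlongrightarrow> 0) at_top"
proof (rule Lim_null_comparison)
  show "\<forall>\<^sub>F T in at_top. norm (G T * of_real (w T)) \<le> M * w T"
    using eventually_ge_at_top[of x]
    by eventually_elim (simp add: norm_mult G_bound weight_nonneg mult_right_mono)
  show "((\<lambda>T. M * w T) \<longlongrightarrow> 0) at_top"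
    using tendsto_mult_right_zero[OF w_lim] by simp
qed

lemma improper_integral_weighted_bound:
  "\<exists>I. has_improper_integral_from (\<lambda>t. \<Phi> t * of_real (w t)) x I \<and> norm I \<le> 2 * M * w x"
proof -
  obtain L where L: "((\<lambda>T. integral {x..T} (\<lambda>t. G t * of_real (w' t))) \<longlongrightarrow> L) at_top"
    by (rule convergent_integral_mult_weight_deriv)
  define I where "I = - G x * of_real (w x) - L"
  have "((\<lambda>T. G T * of_real (w T) - G x * of_real (w x) - integral {x..T} (\<lambda>t. G t * of_real (w' t)))
      \<longlongrightarrow> I) at_top"
    unfolding I_def using tendsto_diff[OF tendsto_diff[OF tendsto_mult_weight_0 tendsto_const] L] by simp
  then have lim: "((\<lambda>T. integral {x..T} (\<lambda>t. \<Phi> t * of_real (w t))) \<longlongrightarrow> I) at_top"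
    by (rule Lim_transform_eventually, use eventually_ge_at_top[of x] in eventually_elim)
       (simp add: integral_unique[OF has_integral_mult_weight_by_parts])
  have "\<forall>\<^sub>F T in at_top. norm (integral {x..T} (\<lambda>t. \<Phi> t * of_real (w t))) \<le> 2 * M * w x"
    using eventually_ge_at_top[of x] by eventually_elim (rule norm_integral_mult_weight_le)
  then have "norm I \<le> 2 * M * w x"
    by (rule tendsto_le[OF trivial_limit_at_top_linorder tendsto_const tendsto_norm[OF lim]])
  moreover have "has_improper_integral_from (\<lambda>t. \<Phi> t * of_real (w t)) x I"
    unfolding has_improper_integral_from_def using lim has_integral_mult_weight_by_parts by blast
  ultimately show ?thesis by blast
qed

end

end

lemma has_improper_integral_from_spike:
  assumes N: "negligible N" and eq: "\<And>t. t \<notin> N \<Longrightarrow> g t = h t"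
    and g: "has_improper_integral_from g x I"
  shows "has_improper_integral_from h x I"
proof -
  have "h integrable_on {x..T}" "integral {x..T} h = integral {x..T} g" if "x \<le> T" for T
  proof -
    have "g integrable_on {x..T}"
      using g that by (simp add: has_improper_integral_from_def)
    then show "h integrable_on {x..T}"
      by (rule integrable_spike[OF _ N]) (simp add: eq)
    show "integral {x..T} h = integral {x..T} g"
      by (rule integral_spike[OF N]) (simp add: eq)
  qed
  then show ?thesis
    using g unfolding has_improper_integral_from_def
    by (auto elim!: Lim_transform_eventually intro: eventually_mono[OF eventually_ge_at_top[of x]])
qed

lemma improper_integral_powr_weight_bound:
  fixes G \<Phi> :: "real \<Rightarrow> complex"
  assumes \<gamma>: "\<gamma> > 0" and x: "x > -1"
    and G_deriv: "\<And>t. x \<le> t \<Longrightarrow> (G has_vector_derivative \<Phi> t) (at t)"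
    and G_bound: "\<And>t. x \<le> t \<Longrightarrow> norm (G t) \<le> M"
  shows "\<exists>I. has_improper_integral_from (\<lambda>t. \<Phi> t / of_real ((t + 1) powr \<gamma>)) x I
           \<and> norm I \<le> 2 * M / (x + 1) powr \<gamma>"
proof -
  define w where "w t = (t + 1) powr (- \<gamma>)" for t
  have "\<exists>I. has_improper_integral_from (\<lambda>t. \<Phi> t * of_real (w t)) x I \<and> norm I \<le> 2 * M * w x"
  proof (rule improper_integral_weighted_bound[where w' = "\<lambda>t. - \<gamma> * (t + 1) powr (- \<gamma> - 1)"])
    show "(w has_real_derivative - \<gamma> * (t + 1) powr (- \<gamma> - 1)) (at t)" if "x \<le> t" for t
      using that x unfolding w_def by (auto intro!: derivative_eq_intros simp: powr_diff)
    show "continuous_on {x..} (\<lambda>t. - \<gamma> * (t + 1) powr (- \<gamma> - 1))"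
      using x by (intro continuous_intros) auto
    show "- \<gamma> * (t + 1) powr (- \<gamma> - 1) \<le> 0" if "x \<le> t" for t
      using \<gamma> by simp
    show "(w \<longlongrightarrow> 0) at_top"
      unfolding w_def using \<gamma> filterlim_tendsto_add_at_top[OF tendsto_const filterlim_ident, of 1]
      by (intro tendsto_neg_powr) (auto simp: add.commute)
    show "continuous_on {x..} G"
      using G_deriv by (intro continuous_at_imp_continuous_on ballI has_vector_derivative_continuous)
        auto
  qed (use G_deriv G_bound in auto)
  moreover have "\<Phi> t * of_real (w t) = \<Phi> t / of_real ((t + 1) powr \<gamma>)" for t
    by (simp add: w_def powr_minus divide_inverse)
  moreover have "2 * M * w x = 2 * M / (x + 1) powr \<gamma>"
    by (simp add: w_def powr_minus divide_inverse)
  ultimately show ?thesis by simp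
qed

section \<open>Absolutely summable Fourier series\<close>

lemma norm_add_of_int_bounded_below:
  fixes z :: complex
  assumes "z \<notin> \<int>"
  obtains \<delta> where "\<delta> > 0" "\<And>n::int. \<delta> \<le> norm (z + of_int n)"
proof (cases "Im z = 0")
  case False
  show ?thesis
  proof (rule that[of "\<bar>Im z\<bar>"])
    show "\<bar>Im z\<bar> > 0" using False by simp
    show "\<bar>Im z\<bar> \<le> norm (z + of_int n)" for n :: int
      using abs_Im_le_cmod[of "z + of_int n"] by simp
  qed
next
  case True
  define r where "r = Re z"
  have z: "z = of_real r"
    using True by (simp add: r_def complex_eq_iff)
  have "frac r > 0"
    using assms frac_ge_0[of r] frac_eq_0_iff[of r] z by (metis Ints_of_real less_eq_real_def)
  show ?thesis
  proof (rule that[of "min (frac r) (1 - frac r)"])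
    show "min (frac r) (1 - frac r) > 0"
      using \<open>frac r > 0\<close> frac_lt_1[of r] by simp
    fix n :: int
    define m where "m = \<lfloor>r\<rfloor> + n"
    have eq: "r + of_int n = of_int m + frac r"
      by (simp add: m_def frac_def)
    have "min (frac r) (1 - frac r) \<le> \<bar>r + of_int n\<bar>"
    proof (cases "m \<ge> 0")
      case True
      then have "real_of_int m \<ge> 0" by simp
      then show ?thesis using eq frac_ge_0[of r] by arith
    next
      case False
      then have "real_of_int m \<le> -1" by simp
      then show ?thesis using eq frac_lt_1[of r] by arith
    qed
    also have "\<bar>r + of_int n\<bar> = norm (z + of_int n)"
      by (metis z norm_of_real of_real_add of_real_of_int_eq)
    finally show "min (frac r) (1 - frac r) \<le> norm (z + of_int n)" .
  qed
qed

locale absolutely_summable_fourier =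
  fixes a :: real and f :: "real \<Rightarrow> complex"
  assumes period_pos: "a > 0"
    and periodic: "\<And>t. f (t + a) = f t"
    and integrable: "f absolutely_integrable_on {0..a}"
    and summable_coeffs: "(\<lambda>n. norm (fourier_coeff a f n)) summable_on (UNIV :: int set)"
begin

text \<open>Series over \<open>\<int>\<close> are enumerated along \<open>int_decode\<close>, so that the library on
  \<open>nat\<close>-indexed series applies.\<close>

definition coeff :: "nat \<Rightarrow> complex" where
  "coeff m = fourier_coeff a f (int_decode m)"

definition fourier_sum :: "real \<Rightarrow> complex" where
  "fourier_sum t = (\<Sum>m. coeff m * fourier_exp a (int_decode m) t)"

lemma summable_norm_coeff: "summable (\<lambda>m. norm (coeff m))"
proof -
  have "(\<lambda>m. norm (fourier_coeff a f (int_decode m))) summable_on UNIV"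
    using summable_on_reindex_bij_betw[of int_decode UNIV UNIV "\<lambda>n. norm (fourier_coeff a f n)"]
      summable_coeffs bij_int_decode by simp
  then show ?thesis
    unfolding coeff_def by (subst (asm) summable_on_UNIV_nonneg_real_iff) auto
qed

lemma summable_fourier_sum: "summable (\<lambda>m. coeff m * fourier_exp a (int_decode m) t)"
  by (rule summable_norm_cancel) (simp add: norm_mult summable_norm_coeff)

lemma continuous_on_fourier_sum: "continuous_on S fourier_sum"
proof (rule uniform_limit_theorem)
  show "uniform_limit S (\<lambda>k t. \<Sum>m<k. coeff m * fourier_exp a (int_decode m) t) fourier_sum
      sequentially"
    unfolding fourier_sum_def
    by (rule Weierstrass_m_test[OF _ summable_norm_coeff]) (simp add: norm_mult)
qed (auto intro!: always_eventually continuous_intros)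

lemma fourier_sum_periodic: "fourier_sum (t + a) = fourier_sum t"
  unfolding fourier_sum_def using period_pos by (simp add: fourier_exp_periodic)

lemma integral_fourier_exp_mult_fourier_sum:
  "integral {0..a} (\<lambda>t. fourier_exp a n t * fourier_sum t)
     = integral {0..a} (\<lambda>t. fourier_exp a n t * f t)"
proof -
  define m0 where "m0 = int_encode (- n)"
  have "fourier_exp a n t * fourier_sum t = (\<Sum>m. coeff m * fourier_exp a (int_decode m + n) t)" for t
    unfolding fourier_sum_def suminf_mult[OF summable_fourier_sum, symmetric]
    by (simp add: fourier_exp_mult[symmetric] ac_simps)
  moreover have "(\<lambda>m. integral {0..a} (\<lambda>t. coeff m * fourier_exp a (int_decode m + n) t)) sums
        integral {0..a} (\<lambda>t. \<Sum>m. coeff m * fourier_exp a (int_decode m + n) t)"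
    by (rule sums_integral_suminf(1)[OF summable_norm_coeff])
       (auto simp: norm_mult intro!: continuous_intros)
  moreover have "integral {0..a} (\<lambda>t. coeff m * fourier_exp a (int_decode m + n) t)
      = (if m = m0 then a * coeff m0 else 0)" for m
  proof -
    have "int_decode m + n = 0 \<longleftrightarrow> m = m0"
      unfolding m0_def by (metis add.commute add_eq_0_iff int_decode_inverse int_encode_inverse)
    then show ?thesis
      using integral_unique[OF has_integral_fourier_exp[OF period_pos, of "int_decode m + n"]]
      by (auto simp: integral_mult_right)
  qed
  ultimately have "integral {0..a} (\<lambda>t. fourier_exp a n t * fourier_sum t) = a * coeff m0"
    using sums_single[of m0 "\<lambda>_. a * coeff m0"] by (simp add: sums_iff)
  also have "\<dots> = integral {0..a} (\<lambda>t. fourier_exp a n t * f t)"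
    unfolding coeff_def m0_def using period_pos by (simp add: fourier_coeff_eq_integral)
  finally show ?thesis .
qed

lemma ae_eq_fourier_sum: "negligible {t. f t \<noteq> fourier_sum t}"
proof -
  define h where "h t = f t - fourier_sum t" for t
  have h_integrable: "h absolutely_integrable_on {0..a}"
    unfolding h_def using integrable absolutely_integrable_continuous[OF continuous_on_fourier_sum]
    by (intro set_integral_diff(1)) auto
  have "integral {0..a} (\<lambda>t. fourier_exp a n t * h t) = 0" for n
  proof -
    have "(\<lambda>t. fourier_exp a n t * f t) integrable_on {0..a}"
      by (intro integrable_continuous_mult integrable continuous_intros)
    moreover have "(\<lambda>t. fourier_exp a n t * fourier_sum t) integrable_on {0..a}"
      by (intro integrable_continuous_interval continuous_intros continuous_on_fourier_sum)
    ultimately show ?thesis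
      unfolding h_def right_diff_distrib
      using integral_fourier_exp_mult_fourier_sum[of n] by (simp add: integral_diff)
  qed
  then have "negligible {t \<in> {0..a}. h t \<noteq> 0}"
    by (rule negligible_nonzero_if_fourier_coeffs_eq_0[OF period_pos h_integrable])
  moreover have "h (t + a) = h t" for t
    by (simp add: h_def periodic fourier_sum_periodic)
  ultimately have "negligible {t. h t \<noteq> 0}"
    using negligible_nonzero_periodic[OF period_pos] by blast
  then show ?thesis by (simp add: h_def)
qed

definition freq :: "nat \<Rightarrow> real" where
  "freq m = 2 * pi * of_int (int_decode m) / a"

lemma fourier_sum_eq_exp_series:
  "fourier_sum t = (\<Sum>m. coeff m * exp (\<i> * of_real (freq m) * of_real t))"
  unfolding fourier_sum_def freq_def fourier_exp_eq_exp ..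

context
  fixes \<xi> :: complex
  assumes nonresonant: "complex_of_real a * \<xi> / (2 * complex_of_real pi) \<notin> \<int>"
begin

lemma shifted_freq_bounded_below:
  obtains \<delta> where "\<delta> > 0" "\<And>m. \<delta> \<le> norm (\<xi> + of_real (freq m))"
proof -
  define z where "z = complex_of_real a * \<xi> / (2 * complex_of_real pi)"
  obtain \<delta> where "\<delta> > 0" and \<delta>: "\<And>n::int. \<delta> \<le> norm (z + of_int n)"
    using norm_add_of_int_bounded_below nonresonant unfolding z_def by blast
  have eq: "\<xi> + of_real (freq m) = of_real (2 * pi / a) * (z + of_int (int_decode m))" for m
    using period_pos by (simp add: z_def freq_def field_simps)
  have "norm (\<xi> + of_real (freq m)) = 2 * pi / a * norm (z + of_int (int_decode m))" for m
    unfolding eq norm_mult norm_of_real using period_pos by simp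
  then have "2 * pi / a * \<delta> \<le> norm (\<xi> + of_real (freq m))" for m
    using \<delta>[of "int_decode m"] period_pos by (simp add: divide_right_mono)
  moreover have "2 * pi / a * \<delta> > 0"
    using \<open>\<delta> > 0\<close> period_pos by simp
  ultimately show ?thesis using that by blast
qed

lemma shifted_freq_nonzero: "\<xi> + of_real (freq m) \<noteq> 0"
  using shifted_freq_bounded_below by (metis norm_zero not_le)

lemma summable_coeff_div_shifted_freq:
  "summable (\<lambda>m. norm (coeff m) / norm (\<xi> + of_real (freq m)))"
proof -
  obtain \<delta> where "\<delta> > 0" and \<delta>: "\<And>m. \<delta> \<le> norm (\<xi> + of_real (freq m))"
    using shifted_freq_bounded_below by blast
  have "norm (coeff m) / norm (\<xi> + of_real (freq m)) \<le> norm (coeff m) / \<delta>" for m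
    using \<delta>[of m] \<open>\<delta> > 0\<close> by (intro divide_left_mono mult_pos_pos) auto
  then show ?thesis
    by (intro summable_comparison_test[OF _ summable_divide[OF summable_norm_coeff, of \<delta>]] exI[of _ 0])
       simp
qed

lemma suminf_coeff_div_shifted_freq:
  "(\<Sum>m. norm (coeff m) / norm (\<xi> + of_real (freq m)))
     = (\<Sum>\<^sub>\<infinity>n\<in>(UNIV :: int set).
          norm (fourier_coeff a f n) / norm (\<xi> + complex_of_real (2 * pi * of_int n / a)))"
proof -
  have "((\<lambda>m. norm (coeff m) / norm (\<xi> + of_real (freq m))) has_sum
      (\<Sum>m. norm (coeff m) / norm (\<xi> + of_real (freq m)))) UNIV"
    by (rule sums_nonneg_imp_has_sum[OF summable_sums[OF summable_coeff_div_shifted_freq]]) simp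
  then have "(\<Sum>m. norm (coeff m) / norm (\<xi> + of_real (freq m)))
      = (\<Sum>\<^sub>\<infinity>m\<in>UNIV. norm (coeff m) / norm (\<xi> + of_real (freq m)))"
    by (simp add: infsumI)
  also have "\<dots> = (\<Sum>\<^sub>\<infinity>n\<in>(UNIV :: int set).
          norm (fourier_coeff a f n) / norm (\<xi> + complex_of_real (2 * pi * of_int n / a)))"
    unfolding coeff_def freq_def by (rule infsum_reindex_bij_betw[OF bij_int_decode])
  finally show ?thesis .
qed

lemma has_vector_derivative_fourier_primitive:
  "(exp_series_primitive coeff freq \<xi> has_vector_derivative exp (\<i> * \<xi> * of_real t) * fourier_sum t)
     (at t)"
  unfolding fourier_sum_eq_exp_series
  by (rule has_vector_derivative_exp_series_primitive[OF summable_norm_coeff shifted_freq_nonzero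
        summable_coeff_div_shifted_freq])

lemma norm_fourier_primitive_le:
  "norm (exp_series_primitive coeff freq \<xi> t)
     \<le> exp (- Im \<xi> * t) * (\<Sum>\<^sub>\<infinity>n\<in>(UNIV :: int set).
          norm (fourier_coeff a f n) / norm (\<xi> + complex_of_real (2 * pi * of_int n / a)))"
  using norm_exp_series_primitive_le[OF summable_norm_coeff shifted_freq_nonzero
      summable_coeff_div_shifted_freq]
  unfolding suminf_coeff_div_shifted_freq .

lemma improper_integral_exp_mult_bound:
  assumes "Im \<xi> \<ge> 0" "\<gamma> > 0" "x \<ge> 0"
  shows "\<exists>I. has_improper_integral_from
              (\<lambda>t. exp (\<i> * \<xi> * complex_of_real t) * f t / complex_of_real ((t + 1) powr \<gamma>)) x I
           \<and> norm (exp (- \<i> * \<xi> * complex_of_real x) * I)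
               \<le> 2 * (\<Sum>\<^sub>\<infinity>n\<in>(UNIV :: int set).
                        norm (fourier_coeff a f n) / norm (\<xi> + complex_of_real (2 * pi * of_int n / a)))
                   * (1 / (x + 1) powr \<gamma>)"
proof -
  define S where "S = (\<Sum>\<^sub>\<infinity>n\<in>(UNIV :: int set).
      norm (fourier_coeff a f n) / norm (\<xi> + complex_of_real (2 * pi * of_int n / a)))"
  have bound: "norm (exp_series_primitive coeff freq \<xi> t) \<le> exp (- Im \<xi> * x) * S" if "x \<le> t" for t
  proof -
    have "exp (- Im \<xi> * t) * S \<le> exp (- Im \<xi> * x) * S"
      using that assms(1) by (intro mult_right_mono) (auto simp: mult_left_mono S_def infsum_nonneg)
    with norm_fourier_primitive_le[of t] show ?thesis
      unfolding S_def by linarith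
  qed
  have "x > -1" using assms(3) by simp
  from improper_integral_powr_weight_bound[OF assms(2) this has_vector_derivative_fourier_primitive bound]
  obtain I where I: "has_improper_integral_from
      (\<lambda>t. exp (\<i> * \<xi> * of_real t) * fourier_sum t / of_real ((t + 1) powr \<gamma>)) x I"
    and I_le: "norm I \<le> 2 * (exp (- Im \<xi> * x) * S) / (x + 1) powr \<gamma>"
    by blast
  have "has_improper_integral_from
      (\<lambda>t. exp (\<i> * \<xi> * of_real t) * f t / of_real ((t + 1) powr \<gamma>)) x I"
    by (rule has_improper_integral_from_spike[OF ae_eq_fourier_sum _ I]) simp
  moreover have "norm (exp (- \<i> * \<xi> * of_real x) * I) = exp (Im \<xi> * x) * norm I"
    by (simp add: norm_mult norm_exp_eq_Re)
  moreover have "exp (Im \<xi> * x) * norm I \<le> 2 * S * (1 / (x + 1) powr \<gamma>)"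
    using mult_left_mono[OF I_le, of "exp (Im \<xi> * x)"] by (simp add: exp_minus field_simps)
  ultimately show ?thesis
    unfolding S_def by auto
qed

end

end

theorem lemma3p2:
  fixes a \<gamma> :: real and f :: "real \<Rightarrow> complex" and \<xi> :: complex
  assumes a_pos: "a > 0"
    and gamma: "1/2 < \<gamma>" "\<gamma> \<le> 1"
    and periodic: "\<And>t. f (t + a) = f t"
    and L1: "f absolutely_integrable_on {0..a}"
    and l1_coeffs: "(\<lambda>n. norm (fourier_coeff a f n)) summable_on (UNIV :: int set)"
    and xi_upper: "Im \<xi> \<ge> 0"
    and xi_nonres: "complex_of_real a * \<xi> / (2 * complex_of_real pi) \<notin> \<int>"
  shows "\<forall>x\<ge>0. \<exists>I. has_improper_integral_from
              (\<lambda>t. exp (\<i> * \<xi> * complex_of_real t) * f t / complex_of_real ((t + 1) powr \<gamma>)) x I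
           \<and> norm (exp (- \<i> * \<xi> * complex_of_real x) * I)
               \<le> 2 * (\<Sum>\<^sub>\<infinity>n\<in>(UNIV :: int set).
                        norm (fourier_coeff a f n) / norm (\<xi> + complex_of_real (2 * pi * of_int n / a)))
                   * (1 / (x + 1) powr \<gamma>)"
proof -
  interpret absolutely_summable_fourier a f
    using a_pos periodic L1 l1_coeffs by unfold_locales
  show ?thesis
    using improper_integral_exp_mult_bound[OF xi_nonres xi_upper] gamma by simp
qed

end
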